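(* Let $(B_{i,j})_{i,j\in\mathbb{Z}}$ be an infinite matrix with $B_{i,j}=0$ whenever $i\le 0$ or $j\le 0$. Then there is a unique infinite matrix $(A_{i,j})_{i,j\in\mathbb{Z}}$ such that $$B_{i,j}=A_{i,j}-A_{i-1,j}-A_{i,j-1}\quad\text{for all } i,j\in\mathbb{Z}$$ and $A_{0,j}=A_{i,0}=0$ for all $i,j\in\mathbb{Z}$. It is given by $$A_{i,j}=\sum_{k=0}^{\infty}\sum_{l=0}^{k}\binom{k}{l}B_{i-l,j-k+l}.$$
   Context: In the paper the defining relation is written as $B_{i,j}=(\mathrm{id}-(E_i^{-1}+E_j^{-1}))A_{i,j}$, where $E_x$ is the shift operator $E_x a(x)=a(x+1)$; this equals $A_{i,j}-A_{i-1,j}-A_{i,j-1}$. *)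

theory Defs
  imports Complex_Main
begin

end

theory Submission
  imports Defs
begin

text \<open>With the backward shifts \<open>E\<^sub>i\<^sup>-\<^sup>1\<close>, \<open>E\<^sub>j\<^sup>-\<^sup>1\<close> the recurrence reads
  \<open>B = (id - (E\<^sub>i\<^sup>-\<^sup>1 + E\<^sub>j\<^sup>-\<^sup>1)) A\<close>, so formally \<open>A = \<Sum>\<^sub>k (E\<^sub>i\<^sup>-\<^sup>1 + E\<^sub>j\<^sup>-\<^sup>1)\<^sup>k B\<close>, and the
  \<open>k\<close>-th term is the binomially weighted sum of \<open>B\<close> over an antidiagonal. Because \<open>B\<close> is
  supported in the open positive quadrant, the \<open>k\<close>-th term vanishes at \<open>(i, j)\<close> once
  \<open>k \<ge> i + j - 1\<close>, so the series is a finite sum and the geometric-series telescoping is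
  exact. Uniqueness holds because a solution of the homogeneous recurrence vanishing on both
  axes vanishes everywhere: the recurrence propagates the zero row by row, in both directions.\<close>

definition pascal_solution :: "(int \<Rightarrow> int \<Rightarrow> 'a::ab_group_add) \<Rightarrow> (int \<Rightarrow> int \<Rightarrow> 'a) \<Rightarrow> bool" where
  "pascal_solution B A \<longleftrightarrow>
     (\<forall>i j. B i j = A i j - A (i - 1) j - A i (j - 1)) \<and> (\<forall>i j. A 0 j = 0 \<and> A i 0 = 0)"

lemma pascal_recurrence_zero_on_axes:
  fixes D :: "int \<Rightarrow> int \<Rightarrow> 'a::ab_group_add"
  assumes rec: "\<And>i j. D i j = D (i - 1) j + D i (j - 1)"
    and axis_i: "\<And>j. D 0 j = 0" and axis_j: "\<And>i. D i 0 = 0"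
  shows "D i j = 0"
proof -
  have row_zero: "\<forall>j. D i j = 0" if prev: "\<forall>j. D (i - 1) j = 0" for i
  proof
    fix j
    have step: "D i j = D i (j - 1)" for j using rec[of i j] prev by simp
    show "D i j = 0"
    proof (induction j rule: int_induct[where k=0])
      case base then show ?case using axis_j by simp
    next
      case (step1 j) then show ?case using step[of "j + 1"] by simp
    next
      case (step2 j) then show ?case using step[of j] by simp
    qed
  qed
  have "\<forall>j. D i j = 0"
  proof (induction i rule: int_induct[where k=0])
    case base then show ?case using axis_i by simp
  next
    case (step1 i) then show ?case using row_zero[of "i + 1"] by simp
  next
    case (step2 i)
    have "D (i - 1) j = D i j - D i (j - 1)" for j using rec[of i j] by (simp add: eq_diff_eq)
    then show ?case using step2 by simp
  qed
  then show ?thesis by simp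
qed

lemma pascal_solution_unique:
  assumes "pascal_solution B A" and "pascal_solution B A'"
  shows "A' = A"
proof (intro ext)
  fix i j
  have "A' i j - A i j = 0"
  proof (rule pascal_recurrence_zero_on_axes[where D = "\<lambda>i j. A' i j - A i j"])
    fix i j
    have "B i j = A i j - A (i - 1) j - A i (j - 1)" "B i j = A' i j - A' (i - 1) j - A' i (j - 1)"
      using assms unfolding pascal_solution_def by blast+
    then show "A' i j - A i j = (A' (i - 1) j - A (i - 1) j) + (A' i (j - 1) - A i (j - 1))"
      by (simp add: algebra_simps)
  qed (use assms in \<open>simp_all add: pascal_solution_def\<close>)
  then show "A' i j = A i j" by simp
qed

definition backshift_pow :: "(int \<Rightarrow> int \<Rightarrow> 'a::comm_ring_1) \<Rightarrow> nat \<Rightarrow> int \<Rightarrow> int \<Rightarrow> 'a" where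
  "backshift_pow B k i j = (\<Sum>l\<le>k. of_nat (k choose l) * B (i - int l) (j - int k + int l))"

lemma backshift_pow_0: "backshift_pow B 0 i j = B i j"
  unfolding backshift_pow_def by simp

lemma backshift_pow_Suc:
  "backshift_pow B (Suc k) i j = backshift_pow B k (i - 1) j + backshift_pow B k i (j - 1)"
proof -
  have "backshift_pow B (Suc k) i j = B i (j - int k - 1) +
     (\<Sum>l\<le>k. of_nat (Suc k choose Suc l) * B (i - int l - 1) (j - int k + int l))"
    unfolding backshift_pow_def by (subst sum.atMost_Suc_shift) (simp add: algebra_simps)
  also have "\<dots> = B i (j - int k - 1) +
     (\<Sum>l\<le>k. of_nat (k choose Suc l) * B (i - int l - 1) (j - int k + int l)) +
     (\<Sum>l\<le>k. of_nat (k choose l) * B (i - int l - 1) (j - int k + int l))"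
    by (simp add: sum.distrib algebra_simps)
  also have "(\<Sum>l\<le>k. of_nat (k choose l) * B (i - int l - 1) (j - int k + int l))
      = backshift_pow B k (i - 1) j"
    unfolding backshift_pow_def by (simp add: algebra_simps)
  also have "B i (j - int k - 1) +
      (\<Sum>l\<le>k. of_nat (k choose Suc l) * B (i - int l - 1) (j - int k + int l))
      = (\<Sum>l\<le>Suc k. of_nat (k choose l) * B (i - int l) (j - 1 - int k + int l))"
    by (subst sum.atMost_Suc_shift) (simp add: algebra_simps)
  also have "\<dots> = backshift_pow B k i (j - 1)"
    unfolding backshift_pow_def by (simp add: binomial_eq_0)
  finally show ?thesis by simp
qed

lemma backshift_pow_eq_0_on_axes:
  assumes supp: "\<forall>i j. (i \<le> 0 \<or> j \<le> 0) \<longrightarrow> B i j = 0" and "i \<le> 0 \<or> j \<le> 0"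
  shows "backshift_pow B k i j = 0"
  unfolding backshift_pow_def by (rule sum.neutral) (use assms in auto)

lemma backshift_pow_eq_0_large:
  assumes supp: "\<forall>i j. (i \<le> 0 \<or> j \<le> 0) \<longrightarrow> B i j = 0" and large: "i + j - 1 \<le> int k"
  shows "backshift_pow B k i j = 0"
  unfolding backshift_pow_def
proof (rule sum.neutral, intro ballI)
  fix l assume "l \<in> {..k}"
  then have "i - int l \<le> 0 \<or> j - int k + int l \<le> 0" using large by auto
  then show "of_nat (k choose l) * B (i - int l) (j - int k + int l) = 0" using supp by auto
qed

lemma suminf_backshift_pow_eq_sum:
  fixes B :: "int \<Rightarrow> int \<Rightarrow> 'a::{comm_ring_1, topological_space, t2_space}"
  assumes supp: "\<forall>i j. (i \<le> 0 \<or> j \<le> 0) \<longrightarrow> B i j = 0" and "i + j \<le> int N"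
  shows "(\<Sum>k. backshift_pow B k i j) = (\<Sum>k<N. backshift_pow B k i j)"
proof -
  have "(\<lambda>k. backshift_pow B k i j) sums (\<Sum>k<N. backshift_pow B k i j)"
    by (rule sums_finite) (use assms backshift_pow_eq_0_large[OF supp] in auto)
  then show ?thesis by (simp add: sums_iff)
qed

lemma pascal_solution_backshift_series:
  fixes B :: "int \<Rightarrow> int \<Rightarrow> 'a::{comm_ring_1, topological_space, t2_space}"
  assumes supp: "\<forall>i j. (i \<le> 0 \<or> j \<le> 0) \<longrightarrow> B i j = 0"
  shows "pascal_solution B (\<lambda>i j. \<Sum>k. backshift_pow B k i j)"
  unfolding pascal_solution_def
proof (intro conjI allI)
  fix i j :: int
  define N where "N = nat (\<bar>i\<bar> + \<bar>j\<bar>)"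
  have "(\<Sum>k. backshift_pow B k i j) = (\<Sum>k<Suc N. backshift_pow B k i j)"
    by (rule suminf_backshift_pow_eq_sum[OF supp]) (unfold N_def, arith)
  also have "\<dots> = backshift_pow B 0 i j + (\<Sum>k<N. backshift_pow B (Suc k) i j)"
    by (rule sum.lessThan_Suc_shift)
  also have "\<dots> = B i j + (\<Sum>k<N. backshift_pow B k (i - 1) j) + (\<Sum>k<N. backshift_pow B k i (j - 1))"
    by (simp add: backshift_pow_0 backshift_pow_Suc sum.distrib add.assoc)
  also have "(\<Sum>k<N. backshift_pow B k (i - 1) j) = (\<Sum>k. backshift_pow B k (i - 1) j)"
    by (rule suminf_backshift_pow_eq_sum[OF supp, symmetric]) (unfold N_def, arith)
  also have "(\<Sum>k<N. backshift_pow B k i (j - 1)) = (\<Sum>k. backshift_pow B k i (j - 1))"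
    by (rule suminf_backshift_pow_eq_sum[OF supp, symmetric]) (unfold N_def, arith)
  finally show "B i j = (\<Sum>k. backshift_pow B k i j) - (\<Sum>k. backshift_pow B k (i - 1) j)
      - (\<Sum>k. backshift_pow B k i (j - 1))"
    by (simp add: algebra_simps)
next
  fix i j :: int
  show "(\<Sum>k. backshift_pow B k 0 j) = 0" "(\<Sum>k. backshift_pow B k i 0) = 0"
    by (simp_all add: backshift_pow_eq_0_on_axes[OF supp])
qed

theorem proposition2:
  fixes B :: "int \<Rightarrow> int \<Rightarrow> real"
  assumes supp: "\<forall>i j. (i \<le> 0 \<or> j \<le> 0) \<longrightarrow> B i j = 0"
  shows "(\<exists>!A :: int \<Rightarrow> int \<Rightarrow> real.
            (\<forall>i j. B i j = A i j - A (i - 1) j - A i (j - 1)) \<and>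
            (\<forall>i j. A 0 j = 0 \<and> A i 0 = 0)) \<and>
         (let A = (\<lambda>i j. \<Sum>k. \<Sum>l\<le>k. real (k choose l) * B (i - int l) (j - int k + int l))
          in (\<forall>i j. B i j = A i j - A (i - 1) j - A i (j - 1)) \<and>
             (\<forall>i j. A 0 j = 0 \<and> A i 0 = 0))"
proof -
  define A where
    "A = (\<lambda>i j. \<Sum>k. \<Sum>l\<le>k. real (k choose l) * B (i - int l) (j - int k + int l))"
  have solves: "pascal_solution B A"
    using pascal_solution_backshift_series[OF supp] unfolding A_def backshift_pow_def by simp
  then have "\<exists>!A. pascal_solution B A"
    using pascal_solution_unique by blast
  with solves show ?thesis
    unfolding A_def pascal_solution_def Let_def by blast
qed

end
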